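(* Let $N\ge2$ and let $(b,a)\in\mathcal{M}$ satisfy $S(b,a)=(b,a)$. Then (i) $I_k(b,a)=I_{N-k}(b,a)$ for all $1\le k\le N-1$; (ii) $\lambda_j(b,a)=-\lambda_{2N+1-j}(b,a)$ for all $1\le j\le 2N$; (iii) if $N$ is even, then $I_{N/2}(b,a)=0$ and $\lambda_N(b,a)=\lambda_{N+1}(b,a)=0$.
   Context: $\mathcal{M}=\mathbb{R}^N\times\mathbb{R}_{>0}^N$, indices mod $N$; $S(b,a)=(b',a')$ with $b'_j=-b_{N-j}$, $a'_j=a_{N-j-1}$. $y_1,y_2$ solve $a_{k-1}y(k-1)+b_ky(k)+a_ky(k+1)=\lambda y(k)$ with $y_1(0)=1,y_1(1)=0,y_2(0)=0,y_2(1)=1$; $\Delta_\lambda=y_1(N,\lambda)+y_2(N+1,\lambda)$; $\lambda_1\le\dots\le\lambda_{2N}$ are the roots of $\Delta_\lambda^2-4$ with multiplicity (the eigenvalues of the periodic and antiperiodic Jacobi matrices of $(b,a)$), satisfying $\lambda_1<\lambda_2\le\lambda_3<\dots<\lambda_{2N}$. Actions: $I_k=\frac1\pi\int_{\lambda_{2k}}^{\lambda_{2k+1}}\operatorname{arcosh}|\Delta_\lambda/2|\,d\lambda$ for $1\le k\le N-1$. *)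

theory Defs
  imports "HOL-Analysis.Analysis" "HOL-Computational_Algebra.Polynomial"
begin

text \<open>A point (b,a) of M = R^N x R_{>0}^N is represented by two sequences
  b a :: nat => real, of which only the values at 0..N-1 matter; all indices are
  read modulo N.\<close>

definition inM :: "nat \<Rightarrow> (nat \<Rightarrow> real) \<Rightarrow> (nat \<Rightarrow> real) \<Rightarrow> bool" where
  "inM N b a \<longleftrightarrow> (\<forall>j<N. a j > 0)"

definition S_b :: "nat \<Rightarrow> (nat \<Rightarrow> real) \<Rightarrow> nat \<Rightarrow> real" where
  "S_b N b j = - b ((N - j mod N) mod N)"

definition S_a :: "nat \<Rightarrow> (nat \<Rightarrow> real) \<Rightarrow> nat \<Rightarrow> real" where
  "S_a N a j = a ((N + N - 1 - j mod N) mod N)"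

definition S_fixed :: "nat \<Rightarrow> (nat \<Rightarrow> real) \<Rightarrow> (nat \<Rightarrow> real) \<Rightarrow> bool" where
  "S_fixed N b a \<longleftrightarrow> (\<forall>j<N. S_b N b j = b j \<and> S_a N a j = a j)"

text \<open>Solution of a_{k-1} y(k-1) + b_k y(k) + a_k y(k+1) = lambda y(k), as a polynomial
  in lambda, with prescribed y(0) = p0, y(1) = p1.\<close>
fun ypoly :: "nat \<Rightarrow> (nat \<Rightarrow> real) \<Rightarrow> (nat \<Rightarrow> real) \<Rightarrow> real poly \<Rightarrow> real poly \<Rightarrow> nat \<Rightarrow> real poly" where
  "ypoly N b a p0 p1 0 = p0"
| "ypoly N b a p0 p1 (Suc 0) = p1"
| "ypoly N b a p0 p1 (Suc (Suc n)) =
     smult (1 / a (Suc n mod N))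
       ([:- b (Suc n mod N), 1:] * ypoly N b a p0 p1 (Suc n) - smult (a (n mod N)) (ypoly N b a p0 p1 n))"

definition y1 :: "nat \<Rightarrow> (nat \<Rightarrow> real) \<Rightarrow> (nat \<Rightarrow> real) \<Rightarrow> nat \<Rightarrow> real poly" where
  "y1 N b a = ypoly N b a 1 0"

definition y2 :: "nat \<Rightarrow> (nat \<Rightarrow> real) \<Rightarrow> (nat \<Rightarrow> real) \<Rightarrow> nat \<Rightarrow> real poly" where
  "y2 N b a = ypoly N b a 0 1"

definition Delta_poly :: "nat \<Rightarrow> (nat \<Rightarrow> real) \<Rightarrow> (nat \<Rightarrow> real) \<Rightarrow> real poly" where
  "Delta_poly N b a = y1 N b a N + y2 N b a (N + 1)"

definition Delta :: "nat \<Rightarrow> (nat \<Rightarrow> real) \<Rightarrow> (nat \<Rightarrow> real) \<Rightarrow> real \<Rightarrow> real" where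
  "Delta N b a x = poly (Delta_poly N b a) x"

text \<open>lambda_1 <= ... <= lambda_{2N}: roots of Delta^2 - 4 with multiplicity, sorted
  (1-based indexing).\<close>
definition lam :: "nat \<Rightarrow> (nat \<Rightarrow> real) \<Rightarrow> (nat \<Rightarrow> real) \<Rightarrow> nat \<Rightarrow> real" where
  "lam N b a j = sorted_list_of_multiset (proots ((Delta_poly N b a)\<^sup>2 - 4)) ! (j - 1)"

definition action :: "nat \<Rightarrow> (nat \<Rightarrow> real) \<Rightarrow> (nat \<Rightarrow> real) \<Rightarrow> nat \<Rightarrow> real" where
  "action N b a k = (1 / pi) *
     integral {lam N b a (2 * k) .. lam N b a (2 * k + 1)} (\<lambda>x. arcosh \<bar>Delta N b a x / 2\<bar>)"

end

theory Submission
  imports Defs "HOL-Computational_Algebra.Fundamental_Theorem_Algebra"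
begin

text \<open>
  The symmetry S turns a solution y of the difference equation at \<lambda> into the solution
  k \<mapsto> (-1)^k y(N - k) at -\<lambda>. Comparing fundamental solutions shows
  \<Delta>(-\<lambda>) = (-1)^N \<Delta>(\<lambda>), and for even N the reflection about N/2 gives
  \<Delta>(0) = \<plusminus>2. The polynomial \<Delta>^2 - 4 has degree 2N and only real roots, since a
  Floquet solution with multiplier \<plusminus>1 belongs to a self-adjoint periodic problem. Hence its
  roots, counted with multiplicity, are symmetric under negation: this is (ii), (i) follows by
  reflecting the integral defining the action, and (iii) holds because 0 is a root.
\<close>

lemma map_poly_of_real_add:
  "map_poly (of_real :: real \<Rightarrow> 'a::real_field) (p + q) = map_poly of_real p + map_poly of_real q"
  by (intro poly_eqI) (simp add: coeff_map_poly)

lemma map_poly_of_real_diff: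
  "map_poly (of_real :: real \<Rightarrow> 'a::real_field) (p - q) = map_poly of_real p - map_poly of_real q"
  by (intro poly_eqI) (simp add: coeff_map_poly)

lemma map_poly_of_real_mult:
  "map_poly (of_real :: real \<Rightarrow> 'a::real_field) (p * q) = map_poly of_real p * map_poly of_real q"
  by (intro poly_eqI) (simp add: coeff_map_poly coeff_mult)

lemma map_poly_of_real_smult:
  "map_poly (of_real :: real \<Rightarrow> 'a::real_field) (smult c p) = smult (of_real c) (map_poly of_real p)"
  by (rule map_poly_smult) auto

lemma map_poly_of_real_pCons:
  "map_poly (of_real :: real \<Rightarrow> 'a::real_field) (pCons c p) = pCons (of_real c) (map_poly of_real p)"
  by (rule map_poly_pCons) auto

lemma map_poly_of_real_prod:
  "map_poly (of_real :: real \<Rightarrow> 'a::real_field) (\<Prod>i<(n::nat). f i) = (\<Prod>i<n. map_poly of_real (f i))"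
  by (induction n) (simp_all add: map_poly_of_real_mult)

lemma map_poly_of_real_eq_iff:
  "map_poly (of_real :: real \<Rightarrow> 'a::real_field) p = map_poly of_real q \<longleftrightarrow> p = q"
  by (metis coeff_map_poly of_real_0 of_real_eq_iff poly_eqI)

lemma real_rooted_poly_splits:
  fixes q :: "real poly"
  assumes "q \<noteq> 0" and real_roots: "\<And>z. poly (map_poly of_real q) z = 0 \<Longrightarrow> Im z = 0"
  obtains r where "q = smult (lead_coeff q) (\<Prod>i<degree q. [:-r i, 1:])"
proof -
  define qC where "qC = map_poly (of_real :: real \<Rightarrow> complex) q"
  have deg: "degree qC = degree q"
    unfolding qC_def by (rule degree_map_poly) simp
  have lead: "lead_coeff qC = of_real (lead_coeff q)"
    unfolding qC_def using \<open>q \<noteq> 0\<close> by (intro lead_coeff_map_poly_nz) auto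
  obtain root where root: "smult (lead_coeff qC) (\<Prod>i<degree qC. [:-root i, 1:]) = qC"
    using complex_poly_decompose' by blast
  have root_real: "root i = of_real (Re (root i))" if "i < degree q" for i
  proof -
    have "poly qC (root i) = lead_coeff qC * (\<Prod>j<degree qC. root i - root j)"
      by (subst root[symmetric]) (simp add: poly_prod)
    also have "\<dots> = 0"
      using that deg by (simp add: prod_zero_iff) (metis lessThan_iff)
    finally show ?thesis
      using real_roots unfolding qC_def by (simp add: complex_eq_iff)
  qed
  have "map_poly of_real (smult (lead_coeff q) (\<Prod>i<degree q. [:-Re (root i), 1:]))
      = smult (of_real (lead_coeff q)) (\<Prod>i<degree q. map_poly (of_real :: real \<Rightarrow> complex) [:-Re (root i), 1:])"
    by (simp add: map_poly_of_real_smult map_poly_of_real_prod)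
  also have "(\<Prod>i<degree q. map_poly (of_real :: real \<Rightarrow> complex) [:-Re (root i), 1:])
      = (\<Prod>i<degree q. [:-root i, 1:])"
    using root_real by (intro prod.cong refl) (simp add: map_poly_of_real_pCons)
  finally have "map_poly of_real (smult (lead_coeff q) (\<Prod>i<degree q. [:-Re (root i), 1:])) = qC"
    using root lead deg by simp
  then show ?thesis
    using that unfolding qC_def map_poly_of_real_eq_iff by metis
qed

lemma size_proots_real_rooted:
  fixes q :: "real poly"
  assumes "q \<noteq> 0" and "\<And>z. poly (map_poly of_real q) z = 0 \<Longrightarrow> Im z = 0"
  shows "size (proots q) = degree q"
proof -
  obtain r where split: "q = smult (lead_coeff q) (\<Prod>i<degree q. [:-r i, 1:])"
    using real_rooted_poly_splits assms by blast
  have "lead_coeff q \<noteq> 0"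
    using assms(1) by simp
  then have "proots q = (\<Sum>i<degree q. {#r i#})"
    by (subst split) (simp add: proots_prod)
  moreover have "size (\<Sum>i<n. {#r i#}) = n" for n
    by (induction n) auto
  ultimately show ?thesis
    by simp
qed

lemma proots_even_real_rooted:
  fixes q :: "real poly"
  assumes "q \<noteq> 0" and "\<And>z. poly (map_poly of_real q) z = 0 \<Longrightarrow> Im z = 0"
    and even: "\<And>x. poly q (-x) = poly q x"
  shows "image_mset uminus (proots q) = proots q"
proof -
  obtain r where split: "q = smult (lead_coeff q) (\<Prod>i<degree q. [:-r i, 1:])"
    using real_rooted_poly_splits assms by blast
  define n c where "n = degree q" and "c = lead_coeff q"
  have "c \<noteq> 0"
    using assms(1) by (simp add: c_def)
  have split': "q = smult c (\<Prod>i<n. [:-r i, 1:])"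
    using split by (simp add: n_def c_def)
  have "poly (smult (c * (-1)^n) (\<Prod>i<n. [:r i, 1:])) x = poly q (-x)" for x
  proof -
    have "(\<Prod>i<n. - r i - x) = (\<Prod>i<n. (-1) * (r i + x))"
      by (intro prod.cong) auto
    also have "\<dots> = (\<Prod>i<n. -1) * (\<Prod>i<n. r i + x)"
      by (rule prod.distrib)
    finally show ?thesis
      by (subst split') (simp add: poly_prod)
  qed
  then have "poly (smult (c * (-1)^n) (\<Prod>i<n. [:r i, 1:])) = poly q"
    by (intro ext) (simp add: even)
  then have reflected: "q = smult (c * (-1)^n) (\<Prod>i<n. [:r i, 1:])"
    by (simp only: poly_eq_poly_eq_iff)
  have "proots q = (\<Sum>i<n. {#-r i#})"
    using \<open>c \<noteq> 0\<close> by (subst reflected) (simp add: proots_prod)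
  also have "\<dots> = image_mset uminus (\<Sum>i<n. {#r i#})"
    by (induction n) auto
  also have "(\<Sum>i<n. {#r i#}) = proots q"
    using \<open>c \<noteq> 0\<close> by (subst split') (simp add: proots_prod)
  finally show ?thesis
    by simp
qed

lemma sorted_uminus_invariant_nth:
  fixes xs :: "real list"
  assumes "sorted xs" and "mset (map uminus xs) = mset xs" and "i < length xs"
  shows "xs ! i = - xs ! (length xs - 1 - i)"
proof -
  define ys where "ys = map uminus (rev xs)"
  have "sorted ys"
    unfolding ys_def using assms(1) by (auto simp: sorted_iff_nth_mono rev_nth)
  moreover have "mset ys = mset xs"
    unfolding ys_def using assms(2) by simp
  ultimately have "xs = ys"
    using assms(1) by (metis properties_for_sort sorted_sort_id)
  then have "xs ! i = ys ! i"
    by simp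
  then show ?thesis
    using assms(3) unfolding ys_def by (simp add: rev_nth)
qed

lemma sorted_uminus_invariant_middle:
  fixes xs :: "real list"
  assumes "sorted xs" and "mset (map uminus xs) = mset xs" and "length xs = 2 * n" and "n \<ge> 1"
    and "0 \<in> set xs"
  shows "xs ! (n - 1) = 0" and "xs ! n = 0"
proof -
  have antisym: "xs ! (n - 1) = - xs ! n"
    using sorted_uminus_invariant_nth[OF assms(1,2), of "n - 1"] assms(3,4) by simp
  have le: "xs ! (n - 1) \<le> xs ! n"
    using assms by (simp add: sorted_iff_nth_mono)
  obtain i where i: "i < 2 * n" "xs ! i = 0"
    using assms(3,5) by (metis in_set_conv_nth)
  have "xs ! n \<le> 0"
  proof (cases "i \<le> n - 1")
    case True
    then have "xs ! i \<le> xs ! (n - 1)"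
      using assms(1,3,4) by (simp add: sorted_iff_nth_mono)
    then show ?thesis
      using i antisym by linarith
  next
    case False
    then have "xs ! n \<le> xs ! i"
      using assms(1,3) i by (intro sorted_nth_mono) auto
    then show ?thesis
      using i by linarith
  qed
  then show "xs ! n = 0" and "xs ! (n - 1) = 0"
    using antisym le by linarith+
qed

lemma integral_reflect_even:
  fixes f :: "real \<Rightarrow> real"
  assumes "\<And>x. f (-x) = f x"
  shows "integral {-c..-d} f = integral {d..c} f"
proof -
  have "integral {-c..-d} f = integral {-c..-d} (\<lambda>x. f (-x))"
    by (simp only: assms)
  also have "\<dots> = integral {d..c} f"
    by (rule Henstock_Kurzweil_Integration.integral_reflect_real)
  finally show ?thesis .
qed

lemma nat_mod_eq_if_int_dvd_diff:
  "int N dvd int x - int y \<Longrightarrow> x mod N = y mod N"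
  by (metis mod_eq_dvd_iff of_nat_eq_iff zmod_int)

lemma unimodular_2x2_eigenvector:
  fixes m11 m12 m21 m22 e :: "'a::field"
  assumes det: "m11 * m22 - m12 * m21 = 1" and trace: "m11 + m22 = 2 * e" and "e * e = 1"
  obtains c1 c2 where "c1 \<noteq> 0 \<or> c2 \<noteq> 0"
    and "c1 * m11 + c2 * m21 = e * c1" and "c1 * m12 + c2 * m22 = e * c2"
proof (cases "m21 = 0 \<and> m11 = e")
  case True
  then have "m22 = e"
    using trace by algebra
  with True show ?thesis
    using that[of 0 1] by simp
next
  case False
  have "m21 \<noteq> 0 \<or> e - m11 \<noteq> 0"
    using False by auto
  moreover have "m21 * m11 + (e - m11) * m21 = e * m21"
    by algebra
  moreover have "m21 * m12 + (e - m11) * m22 = e * (e - m11)"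
    using det trace \<open>e * e = 1\<close> by algebra
  ultimately show ?thesis
    by (rule that)
qed

lemma unimodular_2x2_solve:
  fixes q11 q12 q21 q22 p11 p12 p21 p22 s :: "'a::field"
  assumes "q11 * q22 - q12 * q21 = 1"
    and "q21 * p11 - q11 * p12 = 0" and "q21 * p21 - q11 * p22 = s"
    and "q22 * p11 - q12 * p12 = -s" and "q22 * p21 - q12 * p22 = 0"
  shows "p21 = -s * q12" and "p22 = -s * q22" and "p12 = -s * q21"
proof -
  show "p21 = -s * q12"
    using assms(1,3,5) by algebra
  show "p22 = -s * q22"
    using assms(1,3,5) by algebra
  show "p12 = -s * q21"
    using assms(1,2,4) by algebra
qed

lemma degree_jacobi_step:
  fixes p q :: "real poly"
  shows "degree (smult c ([:-\<beta>, 1:] * q - smult \<gamma> p)) \<le> max (Suc (degree q)) (degree p)"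
proof -
  have "degree ([:-\<beta>, 1:] * q) \<le> Suc (degree q)"
    using degree_mult_le[of "[:-\<beta>, 1:]" q] by simp
  moreover have "degree (smult \<gamma> p) \<le> degree p"
    by (rule degree_smult_le)
  ultimately have "degree ([:-\<beta>, 1:] * q - smult \<gamma> p) \<le> max (Suc (degree q)) (degree p)"
    by (meson degree_diff_le_max max.mono order_trans)
  then show ?thesis
    using degree_smult_le order_trans by blast
qed

lemma coeff_jacobi_step:
  fixes p q :: "real poly"
  shows "coeff (smult c ([:-\<beta>, 1:] * q - smult \<gamma> p)) (Suc m)
       = c * (coeff q m - \<beta> * coeff q (Suc m) - \<gamma> * coeff p (Suc m))"
  by (simp add: algebra_simps)

lemma degree_y1: "degree (y1 N b a k) \<le> k - 1"
proof -
  have "degree (y1 N b a k) \<le> k - 1 \<and> degree (y1 N b a (Suc k)) \<le> k"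
  proof (induction k)
    case (Suc k)
    have "degree (y1 N b a (Suc (Suc k))) \<le> max (Suc (degree (y1 N b a (Suc k)))) (degree (y1 N b a k))"
      unfolding y1_def ypoly.simps by (rule degree_jacobi_step)
    then show ?case
      using Suc by auto
  qed (simp add: y1_def)
  then show ?thesis
    by simp
qed

lemma degree_y2:
  assumes a_nonzero: "\<And>n. a (n mod N) \<noteq> 0" and "k \<ge> 1"
  shows "degree (y2 N b a k) = k - 1"
proof -
  have "(degree (y2 N b a k) \<le> k - 1 \<and> (k \<ge> 1 \<longrightarrow> coeff (y2 N b a k) (k - 1) \<noteq> 0)) \<and>
        degree (y2 N b a (Suc k)) \<le> k \<and> coeff (y2 N b a (Suc k)) k \<noteq> 0"
  proof (induction k)
    case (Suc k)
    have "degree (y2 N b a (Suc (Suc k))) \<le> max (Suc (degree (y2 N b a (Suc k)))) (degree (y2 N b a k))"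
      unfolding y2_def ypoly.simps by (rule degree_jacobi_step)
    moreover have "coeff (y2 N b a (Suc k)) (Suc k) = 0" "coeff (y2 N b a k) (Suc k) = 0"
      using Suc.IH by (auto intro!: coeff_eq_0)
    then have "coeff (y2 N b a (Suc (Suc k))) (Suc k) = coeff (y2 N b a (Suc k)) k / a (Suc k mod N)"
      unfolding y2_def ypoly.simps coeff_jacobi_step by simp
    ultimately show ?case
      using Suc.IH a_nonzero[of "Suc k"] by auto
  qed (simp add: y2_def)
  then show ?thesis
    using \<open>k \<ge> 1\<close> by (auto intro: le_antisym le_degree)
qed

locale periodic_jacobi =
  fixes N :: nat and b a :: "nat \<Rightarrow> real"
  assumes a_nonzero: "\<And>n. a (n mod N) \<noteq> 0"
begin

definition solution :: "'a::real_field \<Rightarrow> (nat \<Rightarrow> 'a) \<Rightarrow> bool" where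
  "solution z y \<longleftrightarrow> (\<forall>n. of_real (a (Suc n mod N)) * y (Suc (Suc n)) =
     (z - of_real (b (Suc n mod N))) * y (Suc n) - of_real (a (n mod N)) * y n)"

definition ypoly_at :: "real poly \<Rightarrow> real poly \<Rightarrow> 'a::real_field \<Rightarrow> nat \<Rightarrow> 'a" where
  "ypoly_at p0 p1 z n = poly (map_poly of_real (ypoly N b a p0 p1 n)) z"

lemma ypoly_at_initial [simp]:
  "ypoly_at 1 0 z 0 = 1" "ypoly_at 1 0 z (Suc 0) = 0"
  "ypoly_at 0 1 z 0 = 0" "ypoly_at 0 1 z (Suc 0) = 1"
  by (simp_all add: ypoly_at_def)

lemma solution_ypoly_at: "solution z (ypoly_at p0 p1 z)"
  unfolding solution_def
proof
  fix n
  let ?P = "\<lambda>k. poly (map_poly of_real (ypoly N b a p0 p1 k)) z"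
  have rec: "?P (Suc (Suc n)) = of_real (1 / a (Suc n mod N))
      * ((z - of_real (b (Suc n mod N))) * ?P (Suc n) - of_real (a (n mod N)) * ?P n)"
    by (simp only: ypoly.simps map_poly_of_real_smult map_poly_of_real_diff map_poly_of_real_mult
        map_poly_of_real_pCons map_poly_0) (simp add: algebra_simps)
  have "of_real (a (Suc n mod N)) * of_real (1 / a (Suc n mod N)) = (1 :: 'a)"
    using a_nonzero[of "Suc n"] by (simp flip: of_real_mult)
  then show "of_real (a (Suc n mod N)) * ypoly_at p0 p1 z (Suc (Suc n))
      = (z - of_real (b (Suc n mod N))) * ypoly_at p0 p1 z (Suc n) - of_real (a (n mod N)) * ypoly_at p0 p1 z n"
    unfolding ypoly_at_def rec using a_nonzero[of "Suc n"] by (simp flip: mult.assoc)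
qed

lemma solution_real:
  "solution (x::real) y \<Longrightarrow>
     a (Suc n mod N) * y (Suc (Suc n)) = (x - b (Suc n mod N)) * y (Suc n) - a (n mod N) * y n"
  unfolding solution_def by simp

lemma solution_lincomb:
  assumes "solution z y" and "solution z u"
  shows "solution z (\<lambda>n. c * y n + d * u n)"
  unfolding solution_def
proof
  fix n
  let ?A = "of_real (a (Suc n mod N))" and ?B = "z - of_real (b (Suc n mod N))"
    and ?C = "of_real (a (n mod N))"
  have "?A * y (Suc (Suc n)) - (?B * y (Suc n) - ?C * y n) = 0"
    and "?A * u (Suc (Suc n)) - (?B * u (Suc n) - ?C * u n) = 0"
    using assms unfolding solution_def by auto
  moreover have "?A * (c * y (Suc (Suc n)) + d * u (Suc (Suc n)))
      - (?B * (c * y (Suc n) + d * u (Suc n)) - ?C * (c * y n + d * u n))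
    = c * (?A * y (Suc (Suc n)) - (?B * y (Suc n) - ?C * y n))
      + d * (?A * u (Suc (Suc n)) - (?B * u (Suc n) - ?C * u n))"
    by (simp add: algebra_simps)
  ultimately show "?A * (c * y (Suc (Suc n)) + d * u (Suc (Suc n)))
      = ?B * (c * y (Suc n) + d * u (Suc n)) - ?C * (c * y n + d * u n)"
    by simp
qed

lemma wronskian_const:
  assumes "solution z u" and "solution z v"
  shows "of_real (a (n mod N)) * (u n * v (Suc n) - u (Suc n) * v n)
       = of_real (a 0) * (u 0 * v 1 - u 1 * v 0)"
proof (induction n)
  case (Suc n)
  let ?a = "\<lambda>k. of_real (a (k mod N))" and ?c = "z - of_real (b (Suc n mod N))"
  have u: "?a (Suc n) * u (Suc (Suc n)) = ?c * u (Suc n) - ?a n * u n"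
    and v: "?a (Suc n) * v (Suc (Suc n)) = ?c * v (Suc n) - ?a n * v n"
    using assms unfolding solution_def by auto
  have "?a (Suc n) * (u (Suc n) * v (Suc (Suc n)) - u (Suc (Suc n)) * v (Suc n))
      = u (Suc n) * (?a (Suc n) * v (Suc (Suc n))) - (?a (Suc n) * u (Suc (Suc n))) * v (Suc n)"
    by (simp add: algebra_simps)
  also have "\<dots> = ?a n * (u n * v (Suc n) - u (Suc n) * v n)"
    unfolding u v by (simp add: algebra_simps)
  finally show ?case
    using Suc by simp
qed simp

lemma monodromy_det:
  "ypoly_at 1 0 z N * ypoly_at 0 1 z (Suc N) - ypoly_at 1 0 z (Suc N) * ypoly_at 0 1 z N = (1 :: 'a::real_field)"
  using wronskian_const[OF solution_ypoly_at[of z 1 0] solution_ypoly_at[of z 0 1], of N] a_nonzero[of 0]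
  by simp

lemma poly_Delta_poly:
  "poly (map_poly of_real (Delta_poly N b a)) z = ypoly_at 1 0 z N + ypoly_at 0 1 z (Suc N)"
  by (simp add: Delta_poly_def map_poly_of_real_add ypoly_at_def y1_def y2_def)

lemma degree_Delta_poly:
  assumes "N \<ge> 1"
  shows "degree (Delta_poly N b a) = N"
proof -
  have "degree (y2 N b a (N + 1)) = N"
    using degree_y2[where N = N and b = b and a = a] a_nonzero by simp
  moreover have "degree (y1 N b a N) < N"
    using degree_y1[of N b a N] assms by simp
  ultimately show ?thesis
    unfolding Delta_poly_def by (simp add: degree_add_eq_right)
qed

text \<open>Multiply the recurrence by the conjugate of y and sum over one period. The Floquet
  condition with a unimodular multiplier makes the boundary terms of the off-diagonal sum
  cancel, so that this sum is of the form w + cnj w; hence z times a positive real is real.\<close>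

lemma floquet_solution_real:
  assumes "N \<ge> 1" and y: "solution z y" and e: "cmod e = 1"
    and yN: "y N = e * y 0" "y (Suc N) = e * y 1" and nontrivial: "y 0 \<noteq> 0 \<or> y 1 \<noteq> 0"
  shows "Im z = 0"
proof -
  define A B where "A n = complex_of_real (a (n mod N))" and "B n = complex_of_real (b (n mod N))" for n
  have rec: "z * y (Suc n) = A (Suc n) * y (Suc (Suc n)) + B (Suc n) * y (Suc n) + A n * y n" for n
    using y unfolding solution_def A_def B_def by (simp add: algebra_simps)
  define f where "f n = A n * y n * cnj (y (Suc n))" for n
  define S where "S = (\<Sum>n<N. A (Suc n) * cnj (y (Suc n)) * y (Suc (Suc n)))"
  define R where "R = (\<Sum>n<N. B (Suc n) * (cnj (y (Suc n)) * y (Suc n)))"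
  define P where "P = (\<Sum>n<N. (cmod (y (Suc n)))\<^sup>2)"
  have "e * cnj e = 1"
    using e by (metis complex_norm_square mult.commute of_real_1 power_one)
  then have "f N = f 0"
    unfolding f_def A_def using yN by (simp add: algebra_simps)
  then have "(\<Sum>n<N. f n) = (\<Sum>n<N. f (Suc n))"
    using sum_lessThan_telescope[of f N] by (simp add: sum_subtractf)
  also have "\<dots> = cnj S"
    unfolding S_def f_def A_def by (simp add: mult_ac)
  finally have f_sum: "(\<Sum>n<N. f n) = cnj S" .
  have "z * of_real P = (\<Sum>n<N. cnj (y (Suc n)) * (z * y (Suc n)))"
    unfolding P_def of_real_sum sum_distrib_left
    by (intro sum.cong refl) (simp only: complex_norm_square mult_ac)
  also have "\<dots> = R + S + (\<Sum>n<N. f n)"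
    unfolding rec R_def S_def f_def by (simp add: sum.distrib algebra_simps)
  finally have "Im (z * of_real P) = 0"
    unfolding f_sum R_def by (simp add: Im_sum B_def)
  moreover have "P \<noteq> 0"
  proof
    assume "P = 0"
    then have "y (Suc n) = 0" if "n < N" for n
      using that unfolding P_def by (subst (asm) sum_nonneg_eq_0_iff) auto
    then have "y (Suc 0) = 0" and "y (Suc (N - 1)) = 0"
      using \<open>N \<ge> 1\<close> by (auto simp del: Suc_pred)
    then have "y 1 = 0" and "e * y 0 = 0"
      using \<open>N \<ge> 1\<close> yN by simp_all
    then show False
      using nontrivial e by auto
  qed
  ultimately show ?thesis
    by simp
qed

lemma Delta_poly_pm2_root_real:
  assumes "N \<ge> 1" and e: "e = 1 \<or> e = -1"
    and z: "poly (map_poly of_real (Delta_poly N b a)) z = 2 * e"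
  shows "Im z = 0"
proof -
  let ?u = "ypoly_at 1 0 z" and ?v = "ypoly_at 0 1 z"
  have "?u N + ?v (Suc N) = 2 * e"
    using z by (simp add: poly_Delta_poly)
  moreover have "e * e = 1"
    using e by auto
  ultimately obtain c1 c2 where c: "c1 \<noteq> 0 \<or> c2 \<noteq> 0"
    "c1 * ?u N + c2 * ?v N = e * c1" "c1 * ?u (Suc N) + c2 * ?v (Suc N) = e * c2"
    using unimodular_2x2_eigenvector[OF monodromy_det] by blast
  define y where "y n = c1 * ?u n + c2 * ?v n" for n
  show ?thesis
  proof (rule floquet_solution_real)
    show "solution z y"
      unfolding y_def by (intro solution_lincomb solution_ypoly_at)
    show "y N = e * y 0" "y (Suc N) = e * y 1" "y 0 \<noteq> 0 \<or> y 1 \<noteq> 0"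
      using c by (simp_all add: y_def)
    show "cmod e = 1"
      using e by auto
  qed fact
qed

text \<open>If b is odd and a is even under reflection of the index about c, then
  k \<mapsto> (-1)^k y(c - k) turns solutions at x into solutions at -x; a solution w at -x
  with the matching initial values at d is therefore this reflected solution.\<close>

context
  fixes c d :: nat
  assumes a_reflect: "\<And>j. j < c \<Longrightarrow> a ((c + j) mod N) = a ((c - j - 1) mod N)"
    and b_reflect: "\<And>j. j < c \<Longrightarrow> b ((c + j) mod N) = - b ((c - j) mod N)"
    and d_mod: "d mod N = c mod N"
begin

lemma solution_reflection_step:
  assumes y: "solution (x::real) y" and w: "solution (-x) w" and "j + 2 \<le> c"
    and wj: "w (d + j) = (-1)^j * y (c - j)"
    and wSj: "w (d + Suc j) = (-1)^Suc j * y (c - Suc j)"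
  shows "w (d + Suc (Suc j)) = (-1)^j * y (c - Suc (Suc j))"
proof -
  define i where "i = c - Suc (Suc j)"
  have c: "c - j = Suc (Suc i)" "c - Suc j = Suc i"
    using \<open>j + 2 \<le> c\<close> by (simp_all add: i_def)
  have shift: "(d + k) mod N = (c + k) mod N" for k
    using d_mod by (metis mod_add_left_eq)
  have a1: "a ((d + Suc j) mod N) = a (i mod N)"
    using a_reflect[of "Suc j"] shift[of "Suc j"] \<open>j + 2 \<le> c\<close> by (simp add: i_def)
  have a0: "a ((d + j) mod N) = a (Suc i mod N)"
    using a_reflect[of j] shift[of j] c by simp
  have b1: "b ((d + Suc j) mod N) = - b (Suc i mod N)"
    using b_reflect[of "Suc j"] shift[of "Suc j"] c \<open>j + 2 \<le> c\<close> by simp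
  have "a (i mod N) * w (d + Suc (Suc j))
      = (-x + b (Suc i mod N)) * w (d + Suc j) - a (Suc i mod N) * w (d + j)"
    using solution_real[OF w, of "d + j"] a1 a0 b1 by simp
  also have "\<dots> = (-1)^j * ((x - b (Suc i mod N)) * y (Suc i) - a (Suc i mod N) * y (Suc (Suc i)))"
    unfolding wj wSj c by (simp add: algebra_simps)
  also have "\<dots> = (-1)^j * (a (i mod N) * y i)"
    using solution_real[OF y, of i] by simp
  finally show ?thesis
    using a_nonzero[of i] by (simp add: i_def)
qed

lemma solution_reflection:
  assumes y: "solution (x::real) y" and w: "solution (-x) w"
    and init: "w d = y c" "w (Suc d) = - y (c - 1)"
  shows "j \<le> c \<Longrightarrow> w (d + j) = (-1)^j * y (c - j)"
proof (induction j rule: less_induct)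
  case (less j)
  consider "j = 0" | "j = 1" | k where "j = Suc (Suc k)"
    by (metis One_nat_def not0_implies_Suc)
  then show ?case
  proof cases
    case 3
    then have "w (d + k) = (-1)^k * y (c - k)" "w (d + Suc k) = (-1)^Suc k * y (c - Suc k)"
      using less.IH[of k] less.IH[of "Suc k"] less.prems 3 by (simp_all del: power_Suc)
    then show ?thesis
      using solution_reflection_step[OF y w, of k] less.prems 3 by simp
  qed (use init in simp_all)
qed

end

end

locale symmetric_jacobi =
  fixes N :: nat and b a :: "nat \<Rightarrow> real"
  assumes N_ge_2: "N \<ge> 2" and in_M: "inM N b a" and S_fixed: "S_fixed N b a"
begin

sublocale periodic_jacobi
proof
  fix n
  have "n mod N < N"
    using N_ge_2 by simp
  then show "a (n mod N) \<noteq> 0"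
    using in_M unfolding inM_def by fastforce
qed

lemma a_S: "j < N \<Longrightarrow> a ((N + N - 1 - j) mod N) = a j"
  using S_fixed unfolding S_fixed_def S_a_def by auto

lemma b_S: "j < N \<Longrightarrow> b ((N - j) mod N) = - b j"
  using S_fixed unfolding S_fixed_def S_b_def by fastforce

text \<open>S being a reflection about 0, the coefficients are also symmetric about every c with
  2c \<equiv> 0 (mod N); the centres c = N and c = N/2 are used below.\<close>

lemma a_reflect:
  assumes "N dvd 2 * c" and "c \<le> N" and "j < c"
  shows "a ((c + j) mod N) = a ((c - j - 1) mod N)"
proof -
  have "int (N + N - 1 - (c - j - 1)) - int (c + j) = int N * 2 - 2 * int c"
    using assms by auto
  moreover have "int N dvd int N * 2 - 2 * int c"
    using assms(1) by (metis dvd_diff dvd_triv_left of_nat_dvd_iff of_nat_mult of_nat_numeral)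
  ultimately have "(N + N - 1 - (c - j - 1)) mod N = (c + j) mod N"
    by (intro nat_mod_eq_if_int_dvd_diff) (simp only:)
  then show ?thesis
    using a_S[of "c - j - 1"] assms by simp
qed

lemma b_reflect:
  assumes "N dvd 2 * c" and "c \<le> N" and "j < c"
  shows "b ((c + j) mod N) = - b ((c - j) mod N)"
proof -
  define k q where "k = (c - j) mod N" and "q = (c - j) div N"
  have "k < N"
    using N_ge_2 by (simp add: k_def)
  have "c = j + N * q + k"
    using assms(3) div_mult_mod_eq[of "c - j" N] by (simp add: k_def q_def)
  then have "int c = int j + int N * int q + int k"
    by simp
  then have "int (N - k) - int (c + j) = int N * (1 + int q) - 2 * int c"
    using \<open>k < N\<close> by (simp add: of_nat_diff algebra_simps)
  moreover have "int N dvd int N * (1 + int q) - 2 * int c"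
    using assms(1) by (metis dvd_diff dvd_triv_left of_nat_dvd_iff of_nat_mult of_nat_numeral)
  ultimately have "(N - k) mod N = (c + j) mod N"
    by (intro nat_mod_eq_if_int_dvd_diff) (simp only:)
  then show ?thesis
    using b_S[OF \<open>k < N\<close>] unfolding k_def by simp
qed

lemma solution_Suc_period:
  assumes "solution (x::real) y"
  shows "a 0 * y (Suc N) = x * y N - a 0 * y (N - 1)"
proof -
  have "a (N - 1) = a 0"
    using a_reflect[of N 0] N_ge_2 by simp
  moreover have "b 0 = 0"
    using b_S[of 0] N_ge_2 by simp
  ultimately show ?thesis
    using solution_real[OF assms, of "N - 1"] N_ge_2 by (simp add: Suc_diff_1)
qed

lemma solution_reflection_about:
  assumes "N dvd 2 * c" and "c \<le> N" and "d mod N = c mod N"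
    and "solution (x::real) y" and "solution (-x) w"
    and "w d = y c" and "w (Suc d) = - y (c - 1)" and "j \<le> c"
  shows "w (d + j) = (-1)^j * y (c - j)"
  using solution_reflection[of c d] a_reflect[OF assms(1,2)] b_reflect[OF assms(1,2)] assms(3-) by blast

lemma reflect_through_period:
  assumes y: "solution (x::real) y" and "j \<le> N"
  shows "y N * ypoly_at 1 0 (-x) j - y (N - 1) * ypoly_at 0 1 (-x) j = (-1)^j * y (N - j)"
proof -
  define w where "w n = y N * ypoly_at 1 0 (-x) n + (- y (N - 1)) * ypoly_at 0 1 (-x) n" for n
  have "solution (-x) w"
    unfolding w_def by (intro solution_lincomb solution_ypoly_at)
  then have "w (0 + j) = (-1)^j * y (N - j)"
    using solution_reflection_about[of N 0 x y w j] y \<open>j \<le> N\<close> by (simp add: w_def)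
  then show ?thesis
    by (simp add: w_def)
qed

lemma wronskian_period_end:
  "ypoly_at 1 0 x (N - 1) * ypoly_at 0 1 x N - ypoly_at 0 1 x (N - 1) * ypoly_at 1 0 x N = (1::real)"
proof -
  have "a (N - 1) = a 0"
    using a_reflect[of N 0] N_ge_2 by simp
  then have "a 0 * (ypoly_at 1 0 x (N - 1) * ypoly_at 0 1 x N - ypoly_at 1 0 x N * ypoly_at 0 1 x (N - 1))
      = a 0 * 1"
    using wronskian_const[OF solution_ypoly_at[of x 1 0] solution_ypoly_at[of x 0 1], of "N - 1"]
      N_ge_2 by (simp add: Suc_diff_1)
  then show ?thesis
    using a_nonzero[of 0] mult_left_cancel by (simp add: mult.commute)
qed

text \<open>Reflection about N expresses the fundamental solutions at -x through those at x; the
  resulting linear system determines the monodromy at -x.\<close>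

lemma fundamental_solutions_reflect:
  fixes x :: real
  defines "s \<equiv> (-1::real)^N"
  shows "ypoly_at 1 0 (-x) N = -s * ypoly_at 0 1 x (N - 1)"
    and "ypoly_at 0 1 (-x) N = -s * ypoly_at 0 1 x N"
    and "ypoly_at 0 1 (-x) (N - 1) = -s * ypoly_at 1 0 x N"
proof -
  define m where "m = N - 1"
  let ?u = "ypoly_at 1 0 x" and ?v = "ypoly_at 0 1 x"
    and ?U = "ypoly_at 1 0 (-x)" and ?V = "ypoly_at 0 1 (-x)"
  have "N = Suc m"
    using N_ge_2 by (simp add: m_def)
  then have "(-1::real)^m = - s" and idx: "N - m = Suc 0" "N - Suc 0 = m" "m \<le> N"
    by (simp_all add: s_def)
  have det: "?u m * ?v N - ?v m * ?u N = 1"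
    using wronskian_period_end[of x] by (simp add: m_def)
  have "?u N * ?U m - ?u m * ?V m = 0" "?u N * ?U N - ?u m * ?V N = s"
    using reflect_through_period[OF solution_ypoly_at[of x 1 0], of m]
      reflect_through_period[OF solution_ypoly_at[of x 1 0], of N]
    by (simp_all add: idx s_def)
  moreover have "?v N * ?U m - ?v m * ?V m = -s" "?v N * ?U N - ?v m * ?V N = 0"
    using reflect_through_period[OF solution_ypoly_at[of x 0 1], of m]
      reflect_through_period[OF solution_ypoly_at[of x 0 1], of N] \<open>(-1)^m = -s\<close>
    by (simp_all add: idx)
  ultimately show "?U N = -s * ?v (N - 1)" "?V N = -s * ?v N" "?V (N - 1) = -s * ?u N"
    using unimodular_2x2_solve[OF det] by (simp_all add: m_def)
qed

lemma Delta_poly_reflect: "poly (Delta_poly N b a) (-x) = (-1)^N * poly (Delta_poly N b a) x"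
proof -
  define s where "s = (-1::real)^N"
  let ?u = "ypoly_at 1 0 x" and ?v = "ypoly_at 0 1 x"
    and ?U = "ypoly_at 1 0 (-x)" and ?V = "ypoly_at 0 1 (-x)"
  have V_Suc: "a 0 * ?V (Suc N) = -x * ?V N - a 0 * ?V (N - 1)"
    using solution_Suc_period[OF solution_ypoly_at[of "-x" 0 1]] by simp
  have v_Suc: "a 0 * ?v (Suc N) = x * ?v N - a 0 * ?v (N - 1)"
    using solution_Suc_period[OF solution_ypoly_at[of x 0 1]] by simp
  have "a 0 * (?U N + ?V (Suc N)) = a 0 * ?U N - x * ?V N - a 0 * ?V (N - 1)"
    using V_Suc by (simp add: algebra_simps)
  also have "\<dots> = s * (a 0 * ?u N + (x * ?v N - a 0 * ?v (N - 1)))"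
    unfolding fundamental_solutions_reflect s_def by (simp add: algebra_simps)
  also have "\<dots> = a 0 * (s * (?u N + ?v (Suc N)))"
    unfolding v_Suc[symmetric] by (simp add: algebra_simps)
  finally have "?U N + ?V (Suc N) = s * (?u N + ?v (Suc N))"
    using a_nonzero[of 0] by simp
  then show ?thesis
    using poly_Delta_poly[of x] poly_Delta_poly[of "-x"] by (simp add: s_def)
qed

lemma solution_at_0_half_period:
  assumes N: "N = 2 * h" and y: "solution (0::real) y"
  shows "y N = (-1)^h * y 0" and "y (Suc N) = (-1)^h * y 1"
proof -
  have h: "N dvd 2 * h" "h \<le> N" "1 \<le> h"
    using N N_ge_2 by auto
  have "b (h mod N) = 0"
    using b_reflect[OF h(1,2), of 0] h(3) by simp
  moreover have "a ((h - 1) mod N) = a (h mod N)"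
    using a_reflect[OF h(1,2), of 0] h(3) by simp
  ultimately have "a (h mod N) * (y (Suc h) + y (h - 1)) = 0"
    using solution_real[OF y, of "h - 1"] h(3) by (simp add: algebra_simps)
  then have "y (Suc h) = - y (h - 1)"
    using a_nonzero[of h] by (simp add: eq_neg_iff_add_eq_0)
  then have reflect: "y (h + j) = (-1)^j * y (h - j)" if "j \<le> h" for j
    using solution_reflection_about[OF h(1,2) refl, of 0 y y j] y that by simp
  show "y N = (-1)^h * y 0"
    using reflect[of h] N by (simp add: mult_2)
  have "y (N - 1) = (-1)^(h - 1) * y 1"
    using reflect[of "h - 1"] N h(3) by (simp add: mult_2)
  moreover have "a 0 * y (Suc N) = a 0 * - y (N - 1)"
    using solution_Suc_period[OF y] by simp
  then have "y (Suc N) = - y (N - 1)"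
    by (metis a_nonzero mod_0 mult_left_cancel)
  ultimately show "y (Suc N) = (-1)^h * y 1"
    using h(3) by (cases h) simp_all
qed

lemma Delta_poly_at_0:
  assumes "even N"
  shows "(poly (Delta_poly N b a) 0)\<^sup>2 = 4"
proof -
  obtain h where N: "N = 2 * h"
    using assms by blast
  have "poly (Delta_poly N b a) 0 = (-1)^h * 1 + (-1)^h * 1"
    using poly_Delta_poly[of "0::real"]
      solution_at_0_half_period(1)[OF N solution_ypoly_at[of 0 1 0]]
      solution_at_0_half_period(2)[OF N solution_ypoly_at[of 0 0 1]]
    by simp
  then show ?thesis
    by (simp add: power_mult_distrib flip: power_mult)
qed

abbreviation band_edges :: "real list" where
  "band_edges \<equiv> sorted_list_of_multiset (proots ((Delta_poly N b a)\<^sup>2 - 4))"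

lemma lam_eq_band_edges: "lam N b a j = band_edges ! (j - 1)"
  by (simp add: lam_def)

lemma degree_Delta_sq_minus_4: "degree ((Delta_poly N b a)\<^sup>2 - 4) = 2 * N"
proof -
  have "degree (Delta_poly N b a) = N"
    using degree_Delta_poly N_ge_2 by simp
  then have "degree ((Delta_poly N b a)\<^sup>2) = 2 * N"
    using N_ge_2 by (subst degree_power_eq) auto
  moreover have "degree (4 :: real poly) = 0"
    by (metis degree_numeral)
  ultimately show ?thesis
    unfolding diff_conv_add_uminus using N_ge_2 by (subst degree_add_eq_left) simp_all
qed

lemma Delta_sq_minus_4_nonzero: "(Delta_poly N b a)\<^sup>2 - 4 \<noteq> 0"
  using degree_Delta_sq_minus_4 N_ge_2 by (metis degree_0 mult_is_0 not_numeral_le_zero zero_neq_numeral)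

lemma Delta_sq_minus_4_roots_real:
  assumes "poly (map_poly of_real ((Delta_poly N b a)\<^sup>2 - 4)) z = 0"
  shows "Im z = 0"
proof -
  let ?D = "poly (map_poly of_real (Delta_poly N b a)) z"
  have map_eq: "map_poly (of_real :: real \<Rightarrow> complex) ((Delta_poly N b a)\<^sup>2 - 4)
      = map_poly of_real (Delta_poly N b a) * map_poly of_real (Delta_poly N b a) - [:4:]"
    by (simp add: power2_eq_square numeral_poly map_poly_of_real_diff map_poly_of_real_mult
        map_poly_of_real_pCons)
  have "?D * ?D - 4 = 0"
    using assms unfolding map_eq by simp
  then have "(?D - 2) * (?D + 2) = 0"
    by (simp add: algebra_simps)
  then have "?D = 2 * 1 \<or> ?D = 2 * -1"
    by (auto simp: eq_neg_iff_add_eq_0)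
  then show ?thesis
    using Delta_poly_pm2_root_real N_ge_2 by (metis one_le_numeral order_trans)
qed

lemma band_edges_symmetric:
  shows "sorted band_edges" and "length band_edges = 2 * N" and "mset (map uminus band_edges) = mset band_edges"
proof -
  let ?q = "(Delta_poly N b a)\<^sup>2 - 4"
  note Delta_sq_minus_4_nonzero
  moreover have "poly ?q (-x) = poly ?q x" for x
    using Delta_poly_reflect[of x] by (simp add: power_mult_distrib flip: power_mult)
  ultimately have "image_mset uminus (proots ?q) = proots ?q" and "size (proots ?q) = 2 * N"
    using proots_even_real_rooted size_proots_real_rooted Delta_sq_minus_4_roots_real
      degree_Delta_sq_minus_4 by metis+
  then show "sorted band_edges" "length band_edges = 2 * N"
    "mset (map uminus band_edges) = mset band_edges"
    by (simp_all flip: size_mset)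
qed

lemma lam_reflect:
  assumes "1 \<le> j" and "j \<le> 2 * N"
  shows "lam N b a j = - lam N b a (2 * N + 1 - j)"
  using sorted_uminus_invariant_nth[OF band_edges_symmetric(1,3), of "j - 1"] assms
  by (simp add: lam_eq_band_edges band_edges_symmetric(2) Suc_diff_le)

lemma action_reflect:
  assumes "1 \<le> k" and "k \<le> N - 1"
  shows "action N b a k = action N b a (N - k)"
proof -
  have "lam N b a (2 * (N - k)) = - lam N b a (2 * k + 1)"
    and "lam N b a (2 * (N - k) + 1) = - lam N b a (2 * k)"
    using lam_reflect[of "2 * (N - k)"] lam_reflect[of "2 * (N - k) + 1"] assms
    by (simp_all add: algebra_simps)
  moreover have "arcosh \<bar>Delta N b a (-x) / 2\<bar> = arcosh \<bar>Delta N b a x / 2\<bar>" for x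
    unfolding Delta_def Delta_poly_reflect by (simp add: abs_mult)
  ultimately show ?thesis
    unfolding action_def by (simp add: integral_reflect_even)
qed

lemma lam_middle:
  assumes "even N"
  shows "lam N b a N = 0" and "lam N b a (N + 1) = 0"
proof -
  have "poly ((Delta_poly N b a)\<^sup>2 - 4) 0 = 0"
    using Delta_poly_at_0[OF assms] by simp
  then have "0 \<in> set band_edges"
    using Delta_sq_minus_4_nonzero by simp
  then show "lam N b a N = 0" "lam N b a (N + 1) = 0"
    using sorted_uminus_invariant_middle[OF band_edges_symmetric(1,3,2)] N_ge_2
    by (simp_all add: lam_eq_band_edges)
qed

lemma action_middle:
  assumes "even N"
  shows "action N b a (N div 2) = 0"
  using lam_middle assms by (simp add: action_def)

end

theorem corollary4p3:
  fixes N :: nat and b a :: "nat \<Rightarrow> real"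
  assumes "N \<ge> 2" and "inM N b a" and "S_fixed N b a"
  shows "(\<forall>k. 1 \<le> k \<and> k \<le> N - 1 \<longrightarrow> action N b a k = action N b a (N - k))
       \<and> (\<forall>j. 1 \<le> j \<and> j \<le> 2 * N \<longrightarrow> lam N b a j = - lam N b a (2 * N + 1 - j))
       \<and> (even N \<longrightarrow> action N b a (N div 2) = 0 \<and> lam N b a N = 0 \<and> lam N b a (N + 1) = 0)"
proof -
  interpret symmetric_jacobi N b a
    using assms by unfold_locales
  show ?thesis
    using action_reflect lam_reflect action_middle lam_middle by blast
qed

end
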